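(* Assume the setting below and define $$\alpha_{ST}(t)=\max_{0\le i\le N-1}\ \sum_{j=i}^{i+N-1}L_j\,C\left\lceil\frac{t-o_{j,i}}{p}\right\rceil,\qquad t\ge 0.$$ Then for all $s\in\mathbb R$ and $t\ge0$, $C\cdot\Delta t_{ST}(s,s+t)\le\alpha_{ST}(t)$; i.e. $\alpha_{ST}$ is an arrival curve of the credit-frozen part due to ST traffic.
   Context: Fix an output port with physical link rate $C>0$. Its gate control list (GCL) is periodic with period $p>0$ and contains $N\ge 1$ scheduled-traffic (ST) windows per period. Window $k\in\{0,\dots,N-1\}$ is the interval $[o_k,o_k+L_k)$, where $0\le o_0<o_1<\dots<o_{N-1}<p$, $L_k\ge 0$, $o_k+L_k\le o_{k+1}$ for $k<N-1$ and $o_{N-1}+L_{N-1}\le o_0+p$. Indices are extended to all integers periodically: $o_{k+N}=o_k+p$, $L_{k+N}=L_k$. Relative offsets are $o_{j,i}=o_j-o_i$. Let $S=\bigcup_{k\in\mathbb Z}[o_k,o_k+L_k)$ and for $s\le t$ let $\Delta t_{ST}(s,t)$ be the Lebesgue measure of $S\cap[s,t]$. *)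

theory Defs
  imports "HOL-Analysis.Analysis"
begin

text \<open>GCL windows given by offsets off k and lengths L k for k < N,
  extended periodically to all integer indices.\<close>

definition off_ext :: "(nat \<Rightarrow> real) \<Rightarrow> nat \<Rightarrow> real \<Rightarrow> int \<Rightarrow> real" where
  "off_ext off N p k = off (nat (k mod int N)) + p * of_int (k div int N)"

definition len_ext :: "(nat \<Rightarrow> real) \<Rightarrow> nat \<Rightarrow> int \<Rightarrow> real" where
  "len_ext L N k = L (nat (k mod int N))"

definition ST_set :: "(nat \<Rightarrow> real) \<Rightarrow> (nat \<Rightarrow> real) \<Rightarrow> nat \<Rightarrow> real \<Rightarrow> real set" where
  "ST_set off L N p = (\<Union>k::int. {off_ext off N p k ..< off_ext off N p k + len_ext L N k})"

definition delta_ST :: "(nat \<Rightarrow> real) \<Rightarrow> (nat \<Rightarrow> real) \<Rightarrow> nat \<Rightarrow> real \<Rightarrow> real \<Rightarrow> real \<Rightarrow> real" where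
  "delta_ST off L N p s t = measure lebesgue (ST_set off L N p \<inter> {s..t})"

definition alpha_ST :: "real \<Rightarrow> (nat \<Rightarrow> real) \<Rightarrow> (nat \<Rightarrow> real) \<Rightarrow> nat \<Rightarrow> real \<Rightarrow> real \<Rightarrow> real" where
  "alpha_ST C off L N p t =
     Max ((\<lambda>i::int. \<Sum>j\<in>{i..i + int N - 1}.
              len_ext L N j * C *
              of_int \<lceil>(t - (off_ext off N p j - off_ext off N p i)) / p\<rceil>) ` {0..<int N})"

end

theory Submission
  imports Defs
begin

text \<open>The ST time met by an interval of length t is largest when the interval starts at a
  window opening: a start inside a window can be moved back to the opening (the part gained at
  the front is all ST time, at least what is lost at the end), and a start inside a gap can be
  moved forward to the next opening without losing anything. An interval of length t starting at
  the opening o_i meets only windows j + nN with j = i, ..., i + N - 1 and n \<ge> 0 such that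
  o_j + np < o_i + t, i.e. \<lceil>(t - o_{j,i})/p\<rceil> copies of window j. By periodicity only
  i = 0, ..., N - 1 have to be considered.\<close>

lemma lmeasurable_atLeastLessThan [intro]: "{a..<b::real} \<in> lmeasurable"
  by (rule fmeasurableI2[of "{a..b}"]) auto

lemma lmeasurable_Int_atLeastAtMost [intro]:
  "S \<in> sets lebesgue \<Longrightarrow> S \<inter> {a..b::real} \<in> lmeasurable"
  by (rule fmeasurableI2[of "{a..b}"]) auto

lemma measure_le_sum_Ico_cover:
  fixes a b :: "'i \<Rightarrow> real"
  assumes "finite K" "A \<in> sets lebesgue" "A \<subseteq> (\<Union>k\<in>K. {a k..<b k}) \<union> {c}"
    and "\<And>k. k \<in> K \<Longrightarrow> a k \<le> b k"
  shows "measure lebesgue A \<le> (\<Sum>k\<in>K. b k - a k)"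
proof -
  have "measure lebesgue A = measure lebesgue (A - {c})"
    using assms(2) by (simp add: measure_Diff_null_set)
  also have "\<dots> \<le> measure lebesgue (\<Union>k\<in>K. {a k..<b k})"
    using assms(1-3) by (intro measure_mono_fmeasurable) (auto intro!: fmeasurable.finite_UN)
  also have "\<dots> \<le> (\<Sum>k\<in>K. measure lebesgue {a k..<b k})"
    using assms(1) by (intro measure_UNION_le) auto
  also have "\<dots> = (\<Sum>k\<in>K. b k - a k)"
    using assms(4) by (intro sum.cong) auto
  finally show ?thesis .
qed

lemma measure_Int_interval_split:
  fixes S :: "real set"
  assumes "S \<in> sets lebesgue" "a \<le> b" "b \<le> c"
  shows "measure lebesgue (S \<inter> {a..c}) = measure lebesgue (S \<inter> {a..b}) + measure lebesgue (S \<inter> {b..c})"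
proof -
  have "S \<inter> {a..c} = (S \<inter> {a..b}) \<union> (S \<inter> {b..c})" using assms by auto
  moreover have "AE x in lebesgue. x \<notin> S \<inter> {a..b} \<or> x \<notin> S \<inter> {b..c}"
    by (rule AE_I'[of "{b}"]) auto
  then have "measure lebesgue ((S \<inter> {a..b}) \<union> (S \<inter> {b..c}))
      = measure lebesgue (S \<inter> {a..b}) + measure lebesgue (S \<inter> {b..c})"
    using assms(1) by (intro measure_Un_AE) auto
  ultimately show ?thesis by simp
qed

lemma measure_Int_interval_le_earlier_start:
  fixes S :: "real set"
  assumes "S \<in> sets lebesgue" "a \<le> s" "{a..<s} \<subseteq> S" "0 \<le> t"
  shows "measure lebesgue (S \<inter> {s..s+t}) \<le> measure lebesgue (S \<inter> {a..a+t})"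
proof (cases "s \<le> a + t")
  case True
  have "measure lebesgue {a..<s} \<le> measure lebesgue (S \<inter> {a..s})"
    using assms by (intro measure_mono_fmeasurable) auto
  then have "s - a \<le> measure lebesgue (S \<inter> {a..s})"
    using assms(2) by simp
  then have "measure lebesgue (S \<inter> {s..a+t}) + (s - a) \<le> measure lebesgue (S \<inter> {a..a+t})"
    using measure_Int_interval_split[OF assms(1) assms(2) True] by simp
  moreover have "measure lebesgue (S \<inter> {a+t..s+t}) \<le> s - a"
    using assms(1,2) measure_mono_fmeasurable[of "S \<inter> {a+t..s+t}" "{a+t..s+t}" lebesgue] by simp
  ultimately show ?thesis
    using measure_Int_interval_split[OF assms(1) True, of "s+t"] assms(2) by simp
next
  case False
  then have "S \<inter> {a..a+t} = {a..a+t}" using assms(3) by auto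
  moreover have "measure lebesgue (S \<inter> {s..s+t}) \<le> t"
    using assms measure_mono_fmeasurable[of "S \<inter> {s..s+t}" "{s..s+t}" lebesgue] by simp
  ultimately show ?thesis using assms(4) by simp
qed

lemma measure_Int_interval_le_later_start:
  fixes S :: "real set"
  assumes "S \<in> sets lebesgue" "s \<le> b" "S \<inter> {s..<b} = {}"
  shows "measure lebesgue (S \<inter> {s..s+t}) \<le> measure lebesgue (S \<inter> {b..b+t})"
  using assms by (intro measure_mono_fmeasurable) auto

lemma int_crossing_exists:
  fixes f :: "int \<Rightarrow> 'a::linorder"
  assumes "a \<le> b" "f a \<le> s" "s < f b"
  shows "\<exists>i. f i \<le> s \<and> s < f (i + 1)"
proof -
  have "a < b" using assms by (cases "a = b") auto
  then show ?thesis using assms(3)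
  proof (induction b rule: int_gr_induct)
    case base then show ?case using assms(2) by blast
  next
    case (step b)
    show ?case
    proof (cases "s < f b")
      case True then show ?thesis using step.IH by blast
    next
      case False then show ?thesis using step.prems by (auto simp: not_less)
    qed
  qed
qed

locale periodic_gcl =
  fixes p :: real and N :: nat and off L :: "nat \<Rightarrow> real"
  assumes period_pos: "0 < p" and windows_nonempty: "1 \<le> N"
    and off_less: "\<And>k. Suc k < N \<Longrightarrow> off k < off (Suc k)"
    and L_nonneg: "\<And>k. k < N \<Longrightarrow> 0 \<le> L k"
    and window_end_le_off: "\<And>k. Suc k < N \<Longrightarrow> off k + L k \<le> off (Suc k)"
    and last_off_less: "off (N - 1) < off 0 + p"
    and last_window_end_le: "off (N - 1) + L (N - 1) \<le> off 0 + p"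
begin

abbreviation "start \<equiv> off_ext off N p"
abbreviation "len \<equiv> len_ext L N"
abbreviation "ST \<equiv> ST_set off L N p"

lemma start_periodic: "start (k + q * int N) = start k + of_int q * p"
  unfolding off_ext_def using windows_nonempty by (simp add: algebra_simps)

lemma len_periodic: "len (k + q * int N) = len k"
  unfolding len_ext_def by simp

lemma index_periodic_induct:
  assumes "\<And>r. 0 \<le> r \<Longrightarrow> r < int N \<Longrightarrow> Q r" and "\<And>r q. Q r \<Longrightarrow> Q (r + q * int N)"
  shows "Q k"
proof -
  have "Q (k mod int N + (k div int N) * int N)"
    using windows_nonempty by (intro assms) auto
  then show ?thesis by simp
qed

lemma start_eq_off: "0 \<le> r \<Longrightarrow> r < int N \<Longrightarrow> start r = off (nat r)"
  unfolding off_ext_def by simp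

lemma len_eq_L: "0 \<le> r \<Longrightarrow> r < int N \<Longrightarrow> len r = L (nat r)"
  unfolding len_ext_def by simp

lemma len_nonneg: "0 \<le> len k"
  by (rule index_periodic_induct) (auto simp: len_eq_L len_periodic intro: L_nonneg)

lemma start_next:
  "start k < start (k + 1) \<and> start k + len k \<le> start (k + 1)"
proof (rule index_periodic_induct[of "\<lambda>k. start k < start (k + 1) \<and> start k + len k \<le> start (k + 1)"])
  fix r assume r: "0 \<le> r" "r < int N"
  show "start r < start (r + 1) \<and> start r + len r \<le> start (r + 1)"
  proof (cases "r + 1 < int N")
    case True
    then show ?thesis
      using r off_less[of "nat r"] window_end_le_off[of "nat r"]
      by (simp add: start_eq_off len_eq_L nat_add_distrib)
  next
    case False
    then have "r = int N - 1" using r by simp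
    moreover have "start (int N) = off 0 + p"
      using start_periodic[of 0 1] start_eq_off[of 0] windows_nonempty by simp
    ultimately show ?thesis
      using r last_off_less last_window_end_le by (simp add: start_eq_off len_eq_L nat_diff_distrib)
  qed
next
  fix r q assume "start r < start (r + 1) \<and> start r + len r \<le> start (r + 1)"
  then show "start (r + q * int N) < start (r + q * int N + 1) \<and>
      start (r + q * int N) + len (r + q * int N) \<le> start (r + q * int N + 1)"
    using start_periodic[of r q] start_periodic[of "r + 1" q] len_periodic[of r q]
    by (simp add: algebra_simps)
qed

lemma strict_mono_start: "strict_mono start"
proof (rule strict_monoI)
  fix k m :: int assume "k < m"
  then show "start k < start m"
  proof (induction m rule: int_gr_induct)
    case base then show ?case using start_next by blast
  next
    case (step m) then show ?case using start_next[of m] by linarith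
  qed
qed

lemma window_end_le_start: "k < m \<Longrightarrow> start k + len k \<le> start m"
  using start_next[of k] strict_mono_less_eq[OF strict_mono_start, of "k + 1" m] by linarith

lemma mem_ST: "x \<in> ST \<longleftrightarrow> (\<exists>k. start k \<le> x \<and> x < start k + len k)"
  unfolding ST_set_def by auto

lemma ST_measurable: "ST \<in> sets lebesgue"
  unfolding ST_set_def by (intro sets.countable_UN') auto

lemma window_subset_ST: "{start k..<start k + len k} \<subseteq> ST"
  unfolding ST_set_def by auto

lemma ST_Int_gap_empty: "ST \<inter> {start i + len i..<start (i + 1)} = {}"
proof -
  have "x \<notin> {start i + len i..<start (i + 1)}" if "start k \<le> x" "x < start k + len k" for k x
  proof (cases "k \<le> i")
    case True
    then have "start k + len k \<le> start i + len i"
      using window_end_le_start[of k i] len_nonneg[of i] by (cases "k = i") auto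
    then show ?thesis using that by auto
  next
    case False
    then have "start (i + 1) \<le> start k"
      by (simp add: strict_mono_less_eq[OF strict_mono_start])
    then show ?thesis using that by auto
  qed
  then show ?thesis by (auto simp: mem_ST)
qed

lemma start_crossing_exists: "\<exists>i. start i \<le> s \<and> s < start (i + 1)"
proof -
  define q where "q = \<lfloor>(s - off 0) / p\<rfloor>"
  have start_multiple: "start (m * int N) = off 0 + of_int m * p" for m
    using start_periodic[of 0 m] start_eq_off[of 0] windows_nonempty by simp
  have "of_int q * p \<le> s - off 0" "s - off 0 < of_int (q + 1) * p"
    unfolding q_def using floor_divide_lower floor_divide_upper period_pos by simp_all
  then show ?thesis
    using int_crossing_exists[of "q * int N" "(q + 1) * int N" start s] start_multiple
    by (simp add: mult_right_mono)
qed

lemma ST_worst_case_at_window_start: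
  assumes "0 \<le> t"
  shows "\<exists>j. measure lebesgue (ST \<inter> {s..s+t}) \<le> measure lebesgue (ST \<inter> {start j..start j + t})"
proof -
  obtain i where i: "start i \<le> s" "s < start (i + 1)"
    using start_crossing_exists by blast
  show ?thesis
  proof (cases "s < start i + len i")
    case True
    then have "{start i..<s} \<subseteq> ST" using window_subset_ST[of i] by auto
    then show ?thesis
      using measure_Int_interval_le_earlier_start[OF ST_measurable i(1) _ assms] by blast
  next
    case False
    then have "ST \<inter> {s..<start (i + 1)} = {}" using ST_Int_gap_empty[of i] by auto
    then show ?thesis
      using measure_Int_interval_le_later_start[OF ST_measurable less_imp_le[OF i(2)]] by blast
  qed
qed

definition windows_opened :: "int \<Rightarrow> real \<Rightarrow> int set" where
  "windows_opened i t = {k. i \<le> k \<and> start k < start i + t}"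

text \<open>This is where the strict order of the offsets is needed: if o_j - o_i could equal p,
  the ceiling would be -1 at t = 0.\<close>

lemma ceiling_periods_nonneg:
  assumes "0 \<le> t" "j \<in> {i..i + int N - 1}"
  shows "0 \<le> \<lceil>(t - (start j - start i)) / p\<rceil>"
proof -
  have "start j < start (i + 1 * int N)"
    using assms(2) by (intro strict_monoD[OF strict_mono_start]) auto
  then have "-1 < (t - (start j - start i)) / p"
    using start_periodic[of i 1] assms(1) period_pos by (simp add: field_simps)
  then show ?thesis by (simp add: ceiling_less_iff)
qed

lemma windows_opened_subset:
  "windows_opened i t \<subseteq> (\<lambda>(j, n). j + n * int N) `
     (SIGMA j:{i..i + int N - 1}. {0..<\<lceil>(t - (start j - start i)) / p\<rceil>})"
proof
  fix k assume k: "k \<in> windows_opened i t"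
  define j where "j = i + (k - i) mod int N"
  define n where "n = (k - i) div int N"
  have kjn: "k = j + n * int N" unfolding j_def n_def by simp
  have j: "j \<in> {i..i + int N - 1}" unfolding j_def using windows_nonempty by auto
  have n: "0 \<le> n"
    unfolding n_def using k windows_nonempty by (simp add: windows_opened_def pos_imp_zdiv_nonneg_iff)
  have "of_int n * p < t - (start j - start i)"
    using k kjn start_periodic[of j n] by (simp add: windows_opened_def)
  then have "n < \<lceil>(t - (start j - start i)) / p\<rceil>"
    using period_pos by (simp add: less_ceiling_iff field_simps)
  with j n kjn show "k \<in> (\<lambda>(j, n). j + n * int N) `
      (SIGMA j:{i..i + int N - 1}. {0..<\<lceil>(t - (start j - start i)) / p\<rceil>})"
    by force
qed

lemma finite_windows_opened: "finite (windows_opened i t)"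
  by (rule finite_subset[OF windows_opened_subset]) auto

lemma measure_ST_from_start_le_sum:
  "measure lebesgue (ST \<inter> {start i..start i + t}) \<le> (\<Sum>k\<in>windows_opened i t. len k)"
proof -
  have "ST \<inter> {start i..start i + t}
      \<subseteq> (\<Union>k\<in>windows_opened i t. {start k..<start k + len k}) \<union> {start i + t}"
  proof
    fix x assume x: "x \<in> ST \<inter> {start i..start i + t}"
    then obtain k where k: "start k \<le> x" "x < start k + len k"
      using mem_ST by blast
    have "i \<le> k"
      using window_end_le_start[of k i] x k by (cases "i \<le> k") auto
    with x k show "x \<in> (\<Union>k\<in>windows_opened i t. {start k..<start k + len k}) \<union> {start i + t}"
      unfolding windows_opened_def by (cases "x = start i + t") auto
  qed
  then have "measure lebesgue (ST \<inter> {start i..start i + t})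
      \<le> (\<Sum>k\<in>windows_opened i t. (start k + len k) - start k)"
    using finite_windows_opened ST_measurable len_nonneg by (intro measure_le_sum_Ico_cover) auto
  then show ?thesis by simp
qed

lemma sum_windows_opened_le:
  assumes "0 \<le> t"
  shows "(\<Sum>k\<in>windows_opened i t. len k)
    \<le> (\<Sum>j\<in>{i..i + int N - 1}. len j * of_int \<lceil>(t - (start j - start i)) / p\<rceil>)"
proof -
  define c where "c j = \<lceil>(t - (start j - start i)) / p\<rceil>" for j
  define f where "f = (\<lambda>(j, n). j + n * int N)"
  define P where "P = (SIGMA j:{i..i + int N - 1}. {0..<c j})"
  have "(\<Sum>k\<in>windows_opened i t. len k) \<le> (\<Sum>k\<in>f ` P. len k)"
    using windows_opened_subset[of i t] len_nonneg
    by (intro sum_mono2) (auto simp: f_def P_def c_def)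
  also have "\<dots> \<le> (\<Sum>x\<in>P. len (f x))"
    using len_nonneg sum_image_le[of P "len" f] by (simp add: P_def o_def)
  also have "\<dots> = (\<Sum>j\<in>{i..i + int N - 1}. \<Sum>n\<in>{0..<c j}. len (j + n * int N))"
    unfolding P_def f_def by (subst sum.Sigma) (auto simp: split_def)
  also have "\<dots> = (\<Sum>j\<in>{i..i + int N - 1}. len j * of_int (c j))"
    using ceiling_periods_nonneg[OF assms] by (intro sum.cong) (auto simp: len_periodic c_def)
  finally show ?thesis unfolding c_def .
qed

definition arrival_sum :: "real \<Rightarrow> real \<Rightarrow> int \<Rightarrow> real" where
  "arrival_sum C t i =
     (\<Sum>j\<in>{i..i + int N - 1}. len j * C * of_int \<lceil>(t - (start j - start i)) / p\<rceil>)"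

lemma arrival_sum_periodic: "arrival_sum C t (i + q * int N) = arrival_sum C t i"
proof -
  have "arrival_sum C t (i + q * int N) = (\<Sum>j\<in>(\<lambda>j. j + q * int N) ` {i..i + int N - 1}.
      len j * C * of_int \<lceil>(t - (start j - start (i + q * int N))) / p\<rceil>)"
    unfolding arrival_sum_def image_add_atLeastAtMost' by (simp add: algebra_simps)
  also have "\<dots> = arrival_sum C t i"
    unfolding arrival_sum_def by (subst sum.reindex) (auto simp: len_periodic start_periodic)
  finally show ?thesis .
qed

lemma measure_ST_from_start_le_arrival_sum:
  assumes "0 \<le> C" "0 \<le> t"
  shows "C * measure lebesgue (ST \<inter> {start i..start i + t}) \<le> arrival_sum C t i"
proof -
  have "measure lebesgue (ST \<inter> {start i..start i + t})
      \<le> (\<Sum>j\<in>{i..i + int N - 1}. len j * of_int \<lceil>(t - (start j - start i)) / p\<rceil>)"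
    using measure_ST_from_start_le_sum sum_windows_opened_le[OF assms(2)]
    by (rule order_trans)
  then have "C * measure lebesgue (ST \<inter> {start i..start i + t})
      \<le> C * (\<Sum>j\<in>{i..i + int N - 1}. len j * of_int \<lceil>(t - (start j - start i)) / p\<rceil>)"
    using assms(1) by (rule mult_left_mono)
  then show ?thesis
    unfolding arrival_sum_def sum_distrib_left by (simp add: ac_simps)
qed

end

theorem lemma1:
  fixes C p :: real and N :: nat and off L :: "nat \<Rightarrow> real"
  assumes "C > 0" and "p > 0" and "N \<ge> 1"
    and "0 \<le> off 0"
    and "\<And>k. Suc k < N \<Longrightarrow> off k < off (Suc k)"
    and "off (N - 1) < p"
    and "\<And>k. k < N \<Longrightarrow> L k \<ge> 0"
    and "\<And>k. Suc k < N \<Longrightarrow> off k + L k \<le> off (Suc k)"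
    and "off (N - 1) + L (N - 1) \<le> off 0 + p"
  shows "\<forall>s::real. \<forall>t::real. t \<ge> 0 \<longrightarrow>
           C * delta_ST off L N p s (s + t) \<le> alpha_ST C off L N p t"
proof (intro allI impI)
  fix s t :: real assume t: "0 \<le> t"
  interpret periodic_gcl p N off L
    using assms by unfold_locales auto
  obtain j where j: "measure lebesgue (ST \<inter> {s..s+t}) \<le> measure lebesgue (ST \<inter> {start j..start j + t})"
    using ST_worst_case_at_window_start[OF t] by blast
  have "C * delta_ST off L N p s (s + t) \<le> C * measure lebesgue (ST \<inter> {start j..start j + t})"
    unfolding delta_ST_def using j assms(1) by simp
  also have "\<dots> \<le> arrival_sum C t j"
    using assms(1) t by (intro measure_ST_from_start_le_arrival_sum) auto
  also have "\<dots> = arrival_sum C t (j mod int N)"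
    using arrival_sum_periodic[of C t "j mod int N" "j div int N"] by simp
  also have "\<dots> \<le> Max (arrival_sum C t ` {0..<int N})"
    using assms(3) by (intro Max_ge) auto
  also have "\<dots> = alpha_ST C off L N p t"
    unfolding alpha_ST_def arrival_sum_def by simp
  finally show "C * delta_ST off L N p s (s + t) \<le> alpha_ST C off L N p t" .
qed

end
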